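(* Let $\{X,Y\}$ be a partition of $\mathbb{R}$ into two infinite subsets, let $f$ be a two-point selection on $X$ and $g$ a two-point selection on $Y$. Define $h=f\oplus g$ on $[\mathbb{R}]^2$ by $h(\{x,y\})=x$ if $x\in X$ and $y\in Y$; $h(\{x,y\})=f(\{x,y\})$ if $x,y\in X$; $h(\{x,y\})=g(\{x,y\})$ if $x,y\in Y$. Then $$\mathcal{B}_{f\oplus g}(\mathbb{R}) = \mathcal{B}_f(X)\oplus\mathcal{B}_g(Y),$$ where for $\sigma$-algebras $\mathcal{A}$ on $X$ and $\mathcal{B}$ on $Y$, $\mathcal{A}\oplus\mathcal{B}=\{A\cup B: A\in\mathcal{A},\ B\in\mathcal{B}\}$.
   Context: For a set $Z$, $[Z]^2$ is the set of two-element subsets of $Z$; a two-point selection on $Z$ is a map $f:[Z]^2\to Z$ with $f(F)\in F$. Write $r<_f s$ if $f(\{r,s\})=r$, and $(\leftarrow,r)_f=\{x\in Z: x<_f r\}$, $(r,\rightarrow)_f=\{x\in Z: r<_f x\}$. The topology $\tau_f$ on $Z$ is generated (as a subbase) by all these sets, and $\mathcal{B}_f(Z)$ is the $\sigma$-algebra on $Z$ generated by $\tau_f$. *)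

theory Defs
  imports "HOL-Analysis.Analysis" "HOL-Probability.Probability"
begin

definition two_subsets :: "'a set \<Rightarrow> 'a set set" where
  "two_subsets Z = {F. \<exists>x y. x \<in> Z \<and> y \<in> Z \<and> x \<noteq> y \<and> F = {x, y}}"

definition two_point_selection :: "'a set \<Rightarrow> ('a set \<Rightarrow> 'a) \<Rightarrow> bool" where
  "two_point_selection Z f \<longleftrightarrow> (\<forall>F \<in> two_subsets Z. f F \<in> F)"

definition sel_less :: "'a set \<Rightarrow> ('a set \<Rightarrow> 'a) \<Rightarrow> 'a \<Rightarrow> 'a \<Rightarrow> bool" where
  "sel_less Z f r s \<longleftrightarrow> r \<in> Z \<and> s \<in> Z \<and> r \<noteq> s \<and> f {r, s} = r"

definition sel_left_ray :: "'a set \<Rightarrow> ('a set \<Rightarrow> 'a) \<Rightarrow> 'a \<Rightarrow> 'a set" where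
  "sel_left_ray Z f r = {x \<in> Z. sel_less Z f x r}"

definition sel_right_ray :: "'a set \<Rightarrow> ('a set \<Rightarrow> 'a) \<Rightarrow> 'a \<Rightarrow> 'a set" where
  "sel_right_ray Z f r = {x \<in> Z. sel_less Z f r x}"

text \<open>The topology tau_f on Z, generated by the open rays as a subbase
  (Z itself included, as the empty intersection of subbase elements).\<close>
definition sel_topology :: "'a set \<Rightarrow> ('a set \<Rightarrow> 'a) \<Rightarrow> 'a topology" where
  "sel_topology Z f = topology_generated_by
     (insert Z ((sel_left_ray Z f ` Z) \<union> (sel_right_ray Z f ` Z)))"

definition sel_borel :: "'a set \<Rightarrow> ('a set \<Rightarrow> 'a) \<Rightarrow> 'a set set" where
  "sel_borel Z f = sigma_sets Z {U. openin (sel_topology Z f) U}"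

definition sel_sum :: "'a set \<Rightarrow> 'a set \<Rightarrow> ('a set \<Rightarrow> 'a) \<Rightarrow> ('a set \<Rightarrow> 'a) \<Rightarrow> ('a set \<Rightarrow> 'a)" where
  "sel_sum X Y f g F =
     (if F \<subseteq> X then f F else if F \<subseteq> Y then g F else (THE x. x \<in> F \<and> x \<in> X))"

definition sigma_sum :: "'a set set \<Rightarrow> 'a set set \<Rightarrow> 'a set set" where
  "sigma_sum \<A> \<B> = {A \<union> B | A B. A \<in> \<A> \<and> B \<in> \<B>}"

end

theory Submission
  imports Defs
begin

text \<open>Under \<open>h = f \<oplus> g\<close> every point of \<open>X\<close> lies below every point of \<open>Y\<close>, so an
  \<open>h\<close>-ray meets \<open>X\<close> in an \<open>f\<close>-ray, in \<open>X\<close> or in \<open>{}\<close> (dually for \<open>Y\<close>): the topology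
  \<open>\<tau>\<^sub>h\<close> induces \<open>\<tau>\<^sub>f\<close> on \<open>X\<close> and \<open>\<tau>\<^sub>g\<close> on \<open>Y\<close>. Moreover \<open>X\<close> is open or closed in \<open>\<tau>\<^sub>h\<close>:
  if \<open>X\<close> has an \<open>f\<close>-greatest element \<open>m\<close> then \<open>Y = (m,\<rightarrow>)\<^sub>h\<close>, otherwise
  \<open>X\<close> is the union of the rays \<open>(\<leftarrow>,x)\<^sub>h\<close>, \<open>x \<in> X\<close>. Since the Borel sets of a Borel
  subspace are the traces of the Borel sets, every \<open>h\<close>-Borel set \<open>A\<close> splits as
  \<open>(A \<inter> X) \<union> (A \<inter> Y)\<close> with \<open>f\<close>- and \<open>g\<close>-Borel pieces, and conversely.\<close>

lemma subtopology_topology_generated_by: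
  "subtopology (topology_generated_by S) X = topology_generated_by ((\<lambda>s. s \<inter> X) ` S)"
proof (rule topology_eq[THEN iffD2], intro allI iffI)
  fix U
  assume "openin (subtopology (topology_generated_by S) X) U"
  then obtain V where V: "generate_topology_on S V" and U: "U = V \<inter> X"
    by (auto simp: openin_subtopology openin_topology_generated_by_iff)
  from V have "generate_topology_on ((\<lambda>s. s \<inter> X) ` S) (V \<inter> X)"
  proof induction
    case Empty
    then show ?case by (simp add: generate_topology_on.Empty)
  next
    case (Int a b)
    have "a \<inter> b \<inter> X = (a \<inter> X) \<inter> (b \<inter> X)" by blast
    then show ?case using Int by (simp add: generate_topology_on.Int)
  next
    case (UN K)
    have "\<Union>K \<inter> X = \<Union>((\<lambda>k. k \<inter> X) ` K)" by blast
    moreover have "generate_topology_on ((\<lambda>s. s \<inter> X) ` S) (\<Union>((\<lambda>k. k \<inter> X) ` K))"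
      by (rule generate_topology_on.UN) (use UN in auto)
    ultimately show ?case by simp
  next
    case (Basis s)
    then show ?case by (auto intro: generate_topology_on.Basis)
  qed
  then show "openin (topology_generated_by ((\<lambda>s. s \<inter> X) ` S)) U"
    by (simp add: U openin_topology_generated_by_iff)
next
  fix U
  assume "openin (topology_generated_by ((\<lambda>s. s \<inter> X) ` S)) U"
  then show "openin (subtopology (topology_generated_by S) X) U"
    unfolding openin_topology_generated_by_iff
    by (rule generate_topology_on_coarsest[OF istopology_openin, rotated])
      (auto intro: openin_subtopology_Int topology_generated_by_Basis)
qed

lemma topology_generated_by_insert_empty_eqI:
  assumes "T \<subseteq> S" "S \<subseteq> insert {} T"
  shows "topology_generated_by S = topology_generated_by T"
proof -
  have "generate_topology_on S' s" if "s \<in> insert {} S'" for s S'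
    using that by (auto intro: generate_topology_on.Basis generate_topology_on.Empty)
  then show ?thesis
    unfolding topology_eq openin_topology_generated_by_iff
    using generate_topology_on_coarsest[OF istopology_generate_topology_on] assms
    by (metis subsetD subset_insertI)
qed

lemma sigma_sets_subtopology:
  assumes "X \<in> sigma_sets (topspace T) {U. openin T U}"
  shows "sigma_sets X {U. openin (subtopology T X) U}
           = (\<inter>) X ` sigma_sets (topspace T) {U. openin T U}"
proof -
  have "X \<subseteq> topspace T"
    using assms by (rule sigma_sets_into_sp[rotated]) (auto dest: openin_subset)
  moreover have "{U. openin (subtopology T X) U} = (\<inter>) X ` {U. openin T U}"
    by (auto simp: openin_subtopology)
  ultimately show ?thesis
    using sigma_sets_Int[OF assms] by simp
qed

lemma sigma_algebra_eq_sigma_sum: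
  assumes "sigma_algebra (X \<union> Y) M" "X \<in> M" "Y \<in> M"
  shows "M = sigma_sum ((\<inter>) X ` M) ((\<inter>) Y ` M)"
proof -
  interpret sigma_algebra "X \<union> Y" M by fact
  have "A = X \<inter> A \<union> Y \<inter> A" if "A \<in> M" for A
    using sets_into_space that by blast
  then show ?thesis
    unfolding sigma_sum_def using assms(2,3) by blast
qed

lemma topspace_sel_topology [simp]: "topspace (sel_topology Z f) = Z"
  by (auto simp: sel_topology_def sel_left_ray_def sel_right_ray_def)

lemma sigma_algebra_sel_borel: "sigma_algebra Z (sel_borel Z f)"
  unfolding sel_borel_def
  by (rule sigma_algebra_sigma_sets) (metis PowI mem_Collect_eq openin_subset subsetI topspace_sel_topology)

lemma openin_sel_left_ray: "r \<in> Z \<Longrightarrow> openin (sel_topology Z f) (sel_left_ray Z f r)"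
  and openin_sel_right_ray: "r \<in> Z \<Longrightarrow> openin (sel_topology Z f) (sel_right_ray Z f r)"
  by (simp_all add: sel_topology_def topology_generated_by_Basis)

lemma sel_sum_cross:
  assumes "X \<inter> Y = {}" "x \<in> X" "y \<in> Y"
  shows "sel_sum X Y f g {x, y} = x"
proof -
  have "(THE z. z \<in> {x, y} \<and> z \<in> X) = x"
    by (rule the_equality) (use assms in auto)
  then show ?thesis
    using assms by (auto simp: sel_sum_def)
qed

lemma sel_less_sel_sum_iff:
  assumes "X \<inter> Y = {}"
  shows "sel_less (X \<union> Y) (sel_sum X Y f g) a b \<longleftrightarrow>
           sel_less X f a b \<or> sel_less Y g a b \<or> (a \<in> X \<and> b \<in> Y)"
proof -
  have "sel_sum X Y f g {a, b} = f {a, b}" if "a \<in> X" "b \<in> X"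
    using that by (simp add: sel_sum_def)
  moreover have "sel_sum X Y f g {a, b} = g {a, b}" if "a \<in> Y" "b \<in> Y"
    using that assms by (auto simp: sel_sum_def)
  moreover have "sel_sum X Y f g {a, b} = b" if "a \<in> Y" "b \<in> X"
    using sel_sum_cross[OF assms that(2,1)] by (simp add: insert_commute)
  ultimately show ?thesis
    using sel_sum_cross[OF assms, of a b] assms unfolding sel_less_def by auto
qed

lemma subtopology_sel_topology_sel_sum:
  assumes "X \<inter> Y = {}"
  shows "subtopology (sel_topology (X \<union> Y) (sel_sum X Y f g)) X = sel_topology X f"
    and "subtopology (sel_topology (X \<union> Y) (sel_sum X Y f g)) Y = sel_topology Y g"
proof -
  let ?h = "sel_sum X Y f g"
  have rays_in_X:
      "sel_left_ray (X \<union> Y) ?h r \<inter> X = sel_left_ray X f r"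
      "sel_right_ray (X \<union> Y) ?h r \<inter> X = sel_right_ray X f r"
      "sel_left_ray (X \<union> Y) ?h r \<inter> Y = {}"
      "sel_right_ray (X \<union> Y) ?h r \<inter> Y = Y"
    if "r \<in> X" for r
    using that assms
    by (auto simp: sel_left_ray_def sel_right_ray_def sel_less_sel_sum_iff) (auto simp: sel_less_def)
  have rays_in_Y:
      "sel_left_ray (X \<union> Y) ?h r \<inter> X = X"
      "sel_right_ray (X \<union> Y) ?h r \<inter> X = {}"
      "sel_left_ray (X \<union> Y) ?h r \<inter> Y = sel_left_ray Y g r"
      "sel_right_ray (X \<union> Y) ?h r \<inter> Y = sel_right_ray Y g r"
    if "r \<in> Y" for r
    using that assms
    by (auto simp: sel_left_ray_def sel_right_ray_def sel_less_sel_sum_iff) (auto simp: sel_less_def)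
  let ?S = "insert (X \<union> Y)
             (sel_left_ray (X \<union> Y) ?h ` (X \<union> Y) \<union> sel_right_ray (X \<union> Y) ?h ` (X \<union> Y))"
  have "(\<lambda>s. s \<inter> X) ` ?S = insert X
          (sel_left_ray X f ` X \<union> (\<lambda>_. X) ` Y \<union> sel_right_ray X f ` X \<union> (\<lambda>_. {}) ` Y)"
    and "(\<lambda>s. s \<inter> Y) ` ?S = insert Y
          (sel_left_ray Y g ` Y \<union> (\<lambda>_. {}) ` X \<union> sel_right_ray Y g ` Y \<union> (\<lambda>_. Y) ` X)"
    by (simp_all add: image_image image_Un rays_in_X rays_in_Y cong: image_cong) blast+
  then show "subtopology (sel_topology (X \<union> Y) ?h) X = sel_topology X f"
    and "subtopology (sel_topology (X \<union> Y) ?h) Y = sel_topology Y g"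
    unfolding sel_topology_def subtopology_topology_generated_by
    by (auto intro!: topology_generated_by_insert_empty_eqI)
qed

lemma sel_sum_part_openin:
  assumes "X \<inter> Y = {}"
  shows "openin (sel_topology (X \<union> Y) (sel_sum X Y f g)) X \<or>
         openin (sel_topology (X \<union> Y) (sel_sum X Y f g)) Y"
proof (cases "\<exists>m\<in>X. \<forall>x\<in>X. \<not> sel_less X f m x")
  let ?h = "sel_sum X Y f g"
  case True
  then obtain m where "m \<in> X" "\<forall>x\<in>X. \<not> sel_less X f m x"
    by blast
  then have "Y = sel_right_ray (X \<union> Y) ?h m"
    using assms by (auto simp: sel_right_ray_def sel_less_sel_sum_iff) (auto simp: sel_less_def)
  then show ?thesis
    using openin_sel_right_ray \<open>m \<in> X\<close> by (metis UnI1)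
next
  let ?h = "sel_sum X Y f g"
  case False
  then have "X = \<Union>(sel_left_ray (X \<union> Y) ?h ` X)"
    using assms by (auto simp: sel_left_ray_def sel_less_sel_sum_iff) (auto simp: sel_less_def)
  moreover have "openin (sel_topology (X \<union> Y) ?h) (\<Union>(sel_left_ray (X \<union> Y) ?h ` X))"
    by (auto intro: openin_sel_left_ray)
  ultimately show ?thesis
    by simp
qed

lemma sel_sum_parts_in_sel_borel:
  assumes "X \<inter> Y = {}"
  shows "X \<in> sel_borel (X \<union> Y) (sel_sum X Y f g)" (is "X \<in> ?B")
    and "Y \<in> sel_borel (X \<union> Y) (sel_sum X Y f g)"
proof -
  have "X = (X \<union> Y) - Y" "Y = (X \<union> Y) - X"
    using assms by auto
  moreover have "X \<in> ?B \<or> Y \<in> ?B"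
    using sel_sum_part_openin[OF assms, of f g] by (auto simp: sel_borel_def intro: sigma_sets.Basic)
  ultimately show "X \<in> ?B" "Y \<in> ?B"
    unfolding sel_borel_def by (metis sigma_sets.Compl)+
qed

theorem sel_borel_sel_sum:
  assumes "X \<inter> Y = {}"
  shows "sel_borel (X \<union> Y) (sel_sum X Y f g) = sigma_sum (sel_borel X f) (sel_borel Y g)"
proof -
  let ?T = "sel_topology (X \<union> Y) (sel_sum X Y f g)"
  note parts = sel_sum_parts_in_sel_borel[OF assms, of f g]
  have "sel_borel X f = (\<inter>) X ` sel_borel (X \<union> Y) (sel_sum X Y f g)"
    using sigma_sets_subtopology[of X ?T] parts(1)
    by (simp add: sel_borel_def subtopology_sel_topology_sel_sum[OF assms])
  moreover have "sel_borel Y g = (\<inter>) Y ` sel_borel (X \<union> Y) (sel_sum X Y f g)"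
    using sigma_sets_subtopology[of Y ?T] parts(2)
    by (simp add: sel_borel_def subtopology_sel_topology_sel_sum[OF assms])
  ultimately show ?thesis
    using sigma_algebra_eq_sigma_sum[OF sigma_algebra_sel_borel parts] by simp
qed

theorem theorem3p4:
  fixes X Y :: "real set" and f g :: "real set \<Rightarrow> real"
  assumes "X \<union> Y = UNIV" and "X \<inter> Y = {}"
    and "infinite X" and "infinite Y"
    and "two_point_selection X f" and "two_point_selection Y g"
  shows "sel_borel UNIV (sel_sum X Y f g) = sigma_sum (sel_borel X f) (sel_borel Y g)"
  using sel_borel_sel_sum[OF assms(2)] by (simp add: assms(1))

end
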